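(* Let $\Delta,\Lambda\in\mathcal T_b$ with $\Delta\subset\Lambda^*$, let $\gamma_\Delta,\gamma_\Lambda$ be proper oriented kernels on $\Delta$ and $\Lambda$, and put $\Gamma=\Delta\cup\Lambda$. Then: (i) $\Gamma\in\mathcal T_b$, $\Gamma_+=\Delta_+\cup\Lambda_+$ and $\Gamma_-=\Delta_-\cup\Lambda_-$; (ii) the composition $\gamma_\Gamma:=\gamma_\Delta\gamma_\Lambda$ (defined on $\mathcal F_{S\setminus\Gamma_+}$ by $\gamma_\Gamma(A,\omega)=\int\gamma_\Lambda(A,\sigma)\gamma_\Delta(d\sigma,\omega)$) is well defined and is a proper oriented kernel on $\Gamma$; (iii) if $E$ is countable, then $\gamma_\Delta\gamma_\Lambda=\gamma_\Lambda\gamma_\Delta$.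
   Context: $(S,\le)$ is a countable partially ordered set. For $x\in S$ write $x_-=\{y\in S:y<x\}$, $x_+=\{y\in S:y>x\}$. For $\Upsilon\subset S$: $\max(\Upsilon)=\{x\in\Upsilon: y\notin\Upsilon\text{ for all }y>x\}$, $\min(\Upsilon)=\{x\in\Upsilon: y\notin\Upsilon\text{ for all }y<x\}$, the past $\Upsilon_-=\{x\in S\setminus\Upsilon:\exists y\in\Upsilon,\ x<y\}$, the future $\Upsilon_+=\{x\in S\setminus\Upsilon:\exists y\in\Upsilon,\ x>y\}$, and the outer time $\Upsilon^*=\{x\in S: x\text{ is comparable with no }y\in\Upsilon\}$. Standing assumptions: for every $x\in S$, $\max(x_-)$ and $\min(x_+)$ are finite, every $y<x$ satisfies $y\le y_0<x$ for some $y_0\in\max(x_-)$, every $z>x$ satisfies $z\ge z_0>x$ for some $z_0\in\min(x_+)$; and $S$ has no minimal element. A finite set $\Lambda\subset S$ is a time box if $\Lambda_-\cap\Lambda_+=\emptyset$; $\mathcal T_b$ is the set of time boxes. $(E,\mathcal E)$ is a measurable space, $\Omega=E^S$ with product $\sigma$-algebra $\mathcal F$; $\mathcal F_\Upsilon$ is generated by coordinates in $\Upsilon$. A proper oriented kernel on $\Lambda\in\mathcal T_b$ is a map $\gamma_\Lambda:\mathcal F_{S\setminus\Lambda_+}\times\Omega\to[0,1]$ such that (a) $\gamma_\Lambda(\cdot,\omega)$ is a probability measure for each $\omega$; (b) $\gamma_\Lambda(A,\cdot)$ is $\mathcal F_{\Lambda_-\cup\Lambda^*}$-measurable for each $A\in\mathcal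 F_{S\setminus\Lambda_+}$; (c) $\gamma_\Lambda(A,\cdot)$ is $\mathcal F_{\Lambda_-}$-measurable for each $A\in\mathcal F_\Lambda$; (d) $\gamma_\Lambda(B,\omega)=\mathbf 1_B(\omega)$ for all $B\in\mathcal F_{\Lambda_-\cup\Lambda^*}$. *)

theory Defs
  imports "HOL-Analysis.Analysis"
begin

definition past :: "'s::order set \<Rightarrow> 's set" where
  "past U = {x. x \<notin> U \<and> (\<exists>y\<in>U. x < y)}"

definition future :: "'s::order set \<Rightarrow> 's set" where
  "future U = {x. x \<notin> U \<and> (\<exists>y\<in>U. y < x)}"

definition outer :: "'s::order set \<Rightarrow> 's set" where
  "outer U = {x. \<forall>y\<in>U. \<not> (x \<le> y) \<and> \<not> (y \<le> x)}"

definition maxset :: "'s::order set \<Rightarrow> 's set" where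
  "maxset U = {x\<in>U. \<forall>y. x < y \<longrightarrow> y \<notin> U}"

definition minset :: "'s::order set \<Rightarrow> 's set" where
  "minset U = {x\<in>U. \<forall>y. y < x \<longrightarrow> y \<notin> U}"

definition standing :: "'s::order itself \<Rightarrow> bool" where
  "standing _ \<longleftrightarrow>
     countable (UNIV :: 's set) \<and>
     (\<forall>x::'s. finite (maxset {y. y < x}) \<and> finite (minset {z. x < z}) \<and>
        (\<forall>y. y < x \<longrightarrow> (\<exists>y0\<in>maxset {y. y < x}. y \<le> y0 \<and> y0 < x)) \<and>
        (\<forall>z. x < z \<longrightarrow> (\<exists>z0\<in>minset {z. x < z}. z0 \<le> z \<and> x < z0))) \<and>
     (\<forall>x::'s. \<exists>y. y < x)"

definition time_box :: "'s::order set \<Rightarrow> bool" where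
  "time_box L \<longleftrightarrow> finite L \<and> past L \<inter> future L = {}"

text \<open>Omega = E^S, where E = space M.\<close>
definition Omega :: "'e measure \<Rightarrow> ('s \<Rightarrow> 'e) set" where
  "Omega M = {\<omega>. \<forall>x. \<omega> x \<in> space M}"

definition coord_gen :: "'e measure \<Rightarrow> 's set \<Rightarrow> ('s \<Rightarrow> 'e) set set" where
  "coord_gen M U = {{\<omega>\<in>Omega M. \<omega> x \<in> A} | x A. x \<in> U \<and> A \<in> sets M}"

definition Fsig :: "'e measure \<Rightarrow> 's set \<Rightarrow> ('s \<Rightarrow> 'e) measure" where
  "Fsig M U = sigma (Omega M) (coord_gen M U)"

definition proper_oriented_kernel ::
  "'e measure \<Rightarrow> 's::order set \<Rightarrow> (('s \<Rightarrow> 'e) set \<Rightarrow> ('s \<Rightarrow> 'e) \<Rightarrow> real) \<Rightarrow> bool" where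
  "proper_oriented_kernel M L \<gamma> \<longleftrightarrow>
     (\<forall>\<omega>\<in>Omega M.
        measure_space (Omega M) (sets (Fsig M (- future L))) (\<lambda>A. ennreal (\<gamma> A \<omega>)) \<and>
        (\<forall>A\<in>sets (Fsig M (- future L)). 0 \<le> \<gamma> A \<omega> \<and> \<gamma> A \<omega> \<le> 1) \<and>
        \<gamma> (Omega M) \<omega> = 1) \<and>
     (\<forall>A\<in>sets (Fsig M (- future L)).
        (\<lambda>\<omega>. \<gamma> A \<omega>) \<in> borel_measurable (Fsig M (past L \<union> outer L))) \<and>
     (\<forall>A\<in>sets (Fsig M L).
        (\<lambda>\<omega>. \<gamma> A \<omega>) \<in> borel_measurable (Fsig M (past L))) \<and>
     (\<forall>B\<in>sets (Fsig M (past L \<union> outer L)). \<forall>\<omega>\<in>Omega M. \<gamma> B \<omega> = indicator B \<omega>)"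

definition kernel_measure ::
  "'e measure \<Rightarrow> 's::order set \<Rightarrow> (('s \<Rightarrow> 'e) set \<Rightarrow> ('s \<Rightarrow> 'e) \<Rightarrow> real) \<Rightarrow> ('s \<Rightarrow> 'e) \<Rightarrow> ('s \<Rightarrow> 'e) measure" where
  "kernel_measure M D \<gamma> \<omega> = measure_of (Omega M) (sets (Fsig M (- future D))) (\<lambda>B. ennreal (\<gamma> B \<omega>))"

definition kernel_comp ::
  "'e measure \<Rightarrow> 's::order set \<Rightarrow> (('s \<Rightarrow> 'e) set \<Rightarrow> ('s \<Rightarrow> 'e) \<Rightarrow> real)
     \<Rightarrow> (('s \<Rightarrow> 'e) set \<Rightarrow> ('s \<Rightarrow> 'e) \<Rightarrow> real) \<Rightarrow> ('s \<Rightarrow> 'e) set \<Rightarrow> ('s \<Rightarrow> 'e) \<Rightarrow> real" where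
  "kernel_comp M D \<gamma>D \<gamma>L A \<omega> = integral\<^sup>L (kernel_measure M D \<gamma>D \<omega>) (\<lambda>\<sigma>. \<gamma>L A \<sigma>)"

end

theory Submission
  imports Defs "HOL-Probability.Probability_Measure"
begin

(*
  Proof plan.  (i) is pure order theory: since no point of D is comparable with a point
  of L, the past and future of D \<union> L are the unions of those of D and L, and a point in
  both the past and the future of D \<union> L would contradict either one of the boxes or the
  incomparability.  For (ii) the key facts about a single proper kernel \<gamma> on a box L are:
  under \<gamma>(\<cdot>, \<omega>) every function of the past and outer time of L is almost surely equal to
  its value at \<omega> (properness), so it can be pulled out of \<gamma>-integrals; and for events on
  coordinates U with L \<subseteq> U \<subseteq> - future L, \<omega> \<mapsto> \<gamma>(A, \<omega>) depends only on the past of L and on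
  U - L, proved on rectangles and extended by a Dynkin-system argument, then passed to
  integrals by monotone convergence.  Applied to \<gamma>D and the integrand \<gamma>L(A, \<cdot>) this gives
  all four clauses of properness for \<gamma>D \<gamma>L.  For (iii) both compositions are proper kernels
  on D \<union> L; on rectangles a \<inter> b (a an event on D, b on the rest of the domain) each equals
  \<gamma>D(a, \<omega>) \<gamma>L(b, \<omega>), and rectangles generate the domain.
*)

section \<open>Time boxes\<close>

lemma outer_sym: "D \<subseteq> outer L \<Longrightarrow> L \<subseteq> outer D"
  by (auto simp: outer_def)

lemma box_Int_future: "(L::'s::order set) \<inter> future L = {}"
  unfolding future_def by auto

lemma compl_future_minus: "- future (L::'s::order set) - L \<subseteq> past L \<union> outer L"
  unfolding past_def future_def outer_def by (auto simp: order.order_iff_strict)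

lemma past_outer_subset: "time_box L \<Longrightarrow> past L \<union> outer (L::'s::order set) \<subseteq> - future L"
  unfolding time_box_def past_def future_def outer_def by auto

context
  fixes D L :: "'s::order set"
  assumes DL: "D \<subseteq> outer L"
begin

lemma future_Un: "future (D \<union> L) = future D \<union> future L"
  using DL unfolding future_def outer_def by (auto dest: order.strict_implies_order)

lemma past_Un: "past (D \<union> L) = past D \<union> past L"
  using DL unfolding past_def outer_def by (auto dest: order.strict_implies_order)

text \<open>The past of one box lies in the past or outer time of the other, since a point
  between the two boxes would make them comparable.\<close>
lemma past_subset_past_outer: "past D \<subseteq> past L \<union> outer L"
proof -
  have "past D \<subseteq> - future L - L"
    using DL unfolding past_def future_def outer_def
    by (auto dest: order.strict_implies_order) (blast dest: order.strict_trans order.strict_implies_order)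
  then show ?thesis using compl_future_minus[of L] by blast
qed

end

text \<open>Two incomparable time boxes form a time box: a point in the past and in the future
  of the union would witness either a violation inside one box or a comparison across them.\<close>
lemma time_box_Un:
  assumes tD: "time_box D" and tL: "time_box L" and DL: "D \<subseteq> outer (L::'s::order set)"
  shows "time_box (D \<union> L)"
proof -
  have "x \<notin> past (D \<union> L) \<inter> future (D \<union> L)" for x
  proof
    assume "x \<in> past (D \<union> L) \<inter> future (D \<union> L)"
    then obtain y z where x: "x \<notin> D \<union> L" "y \<in> D \<union> L" "x < y" "z \<in> D \<union> L" "z < x"
      unfolding past_def future_def by blast
    have "z < y" using x by auto
    then have "\<not> (y \<in> D \<and> z \<in> L) \<and> \<not> (y \<in> L \<and> z \<in> D)"
      using DL unfolding outer_def by (auto dest: order.strict_implies_order)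
    then have "x \<in> past D \<inter> future D \<or> x \<in> past L \<inter> future L"
      using x unfolding past_def future_def by auto
    then show False using tD tL unfolding time_box_def by auto
  qed
  then show ?thesis using tD tL unfolding time_box_def by auto
qed

lemma past_outer_Un_subset:
  assumes tD: "time_box D" and tL: "time_box L" and DL: "D \<subseteq> outer (L::'s::order set)"
  shows "past (D \<union> L) \<union> outer (D \<union> L) \<subseteq> past L \<union> outer L"
proof -
  have "past (D \<union> L) \<union> outer (D \<union> L) \<subseteq> - future (D \<union> L) - (D \<union> L)"
    using past_outer_subset[OF time_box_Un[OF tD tL DL]] unfolding past_def outer_def by auto
  also have "\<dots> \<subseteq> - future L - L" using future_Un[OF DL] by auto
  finally show ?thesis using compl_future_minus[of L] by blast
qed

section \<open>Coordinate sigma-algebras\<close>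

lemma coord_gen_Pow: "coord_gen M U \<subseteq> Pow (Omega M)"
  unfolding coord_gen_def by auto

lemma sets_Fsig: "sets (Fsig M U) = sigma_sets (Omega M) (coord_gen M U)"
  unfolding Fsig_def by (rule sets_measure_of[OF coord_gen_Pow])

lemma space_Fsig [simp]: "space (Fsig M U) = Omega M"
  unfolding Fsig_def by (rule space_measure_of[OF coord_gen_Pow])

lemma Omega_in_Fsig [simp]: "Omega M \<in> sets (Fsig M U)"
  using sets.top[of "Fsig M U"] by simp

lemma Fsig_mono: "U \<subseteq> V \<Longrightarrow> sets (Fsig M U) \<subseteq> sets (Fsig M V)"
  unfolding sets_Fsig coord_gen_def by (rule sigma_sets_mono') blast

lemma measurable_Fsig_mono:
  "f \<in> borel_measurable (Fsig M U) \<Longrightarrow> U \<subseteq> V \<Longrightarrow> f \<in> borel_measurable (Fsig M V)"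
  using measurable_mono[of borel borel "Fsig M U" "Fsig M V"] Fsig_mono[of U V M] by auto

lemma measurable_Fsig_cong:
  "(\<And>\<omega>. \<omega> \<in> Omega M \<Longrightarrow> f \<omega> = g \<omega>) \<Longrightarrow> g \<in> borel_measurable (Fsig M U) \<Longrightarrow>
    f \<in> borel_measurable (Fsig M U)"
  using measurable_cong[of "Fsig M U" f g] by simp

text \<open>They form an intersection-stable generator of the sigma-algebra on \<open>U \<union> V\<close>, which lets
  us verify measurability and equality of measures on rectangles only.\<close>
definition rects :: "'e measure \<Rightarrow> 's set \<Rightarrow> 's set \<Rightarrow> ('s \<Rightarrow> 'e) set set" where
  "rects M U V = {a \<inter> b | a b. a \<in> sets (Fsig M U) \<and> b \<in> sets (Fsig M V)}"

lemma rects_Pow: "rects M U V \<subseteq> Pow (Omega M)"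
  unfolding rects_def using sets.sets_into_space by fastforce

lemma rects_Int_stable: "Int_stable (rects M U V)"
proof (rule Int_stableI)
  fix X Y assume "X \<in> rects M U V" "Y \<in> rects M U V"
  then obtain a b a' b' where "X = a \<inter> b" "Y = a' \<inter> b'"
    and "a \<in> sets (Fsig M U)" "a' \<in> sets (Fsig M U)" "b \<in> sets (Fsig M V)" "b' \<in> sets (Fsig M V)"
    unfolding rects_def by blast
  moreover have "X \<inter> Y = (a \<inter> a') \<inter> (b \<inter> b')" using \<open>X = a \<inter> b\<close> \<open>Y = a' \<inter> b'\<close> by blast
  moreover have "a \<inter> a' \<in> sets (Fsig M U)" "b \<inter> b' \<in> sets (Fsig M V)"
    using calculation by (simp_all add: sets.Int)
  ultimately show "X \<inter> Y \<in> rects M U V"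
    unfolding rects_def by blast
qed

lemma sets_Fsig_Un_rects: "sets (Fsig M (U \<union> V)) = sigma_sets (Omega M) (rects M U V)"
proof
  have "coord_gen M (U \<union> V) \<subseteq> rects M U V"
  proof
    fix g assume "g \<in> coord_gen M (U \<union> V)"
    then obtain x A where g: "g = {\<omega>\<in>Omega M. \<omega> x \<in> A}" "x \<in> U \<union> V" "A \<in> sets M"
      unfolding coord_gen_def by blast
    have gen: "g \<in> sets (Fsig M W)" if "x \<in> W" for W
      unfolding sets_Fsig using g that by (intro sigma_sets.Basic) (auto simp: coord_gen_def)
    have "g = g \<inter> Omega M" "g = Omega M \<inter> g" using g by auto
    from g(2) show "g \<in> rects M U V"
    proof (elim UnE)
      assume "x \<in> U"
      with gen[of U] Omega_in_Fsig \<open>g = g \<inter> Omega M\<close> show ?thesis unfolding rects_def by blast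
    next
      assume "x \<in> V"
      with gen[of V] Omega_in_Fsig \<open>g = Omega M \<inter> g\<close> show ?thesis unfolding rects_def by blast
    qed
  qed
  then show "sets (Fsig M (U \<union> V)) \<subseteq> sigma_sets (Omega M) (rects M U V)"
    unfolding sets_Fsig by (rule sigma_sets_mono')
next
  have "rects M U V \<subseteq> sets (Fsig M (U \<union> V))"
    unfolding rects_def using Fsig_mono[of U "U \<union> V" M] Fsig_mono[of V "U \<union> V" M] by auto
  then show "sigma_sets (Omega M) (rects M U V) \<subseteq> sets (Fsig M (U \<union> V))"
    using sigma_sets_mono'[of "rects M U V" "sets (Fsig M (U \<union> V))" "Omega M"]
      sets.sigma_sets_eq[of "Fsig M (U \<union> V)"] by simp
qed

section \<open>A single proper oriented kernel\<close>

locale kernel_on_box =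
  fixes M :: "'e measure" and L :: "'s::order set"
    and \<gamma> :: "('s \<Rightarrow> 'e) set \<Rightarrow> ('s \<Rightarrow> 'e) \<Rightarrow> real"
  assumes tL: "time_box L" and K: "proper_oriented_kernel M L \<gamma>"
begin

lemma kernel_measure_space:
  "\<omega> \<in> Omega M \<Longrightarrow> measure_space (Omega M) (sets (Fsig M (- future L))) (\<lambda>A. ennreal (\<gamma> A \<omega>))"
  using K unfolding proper_oriented_kernel_def by auto

lemma kernel_bounds:
  "\<omega> \<in> Omega M \<Longrightarrow> A \<in> sets (Fsig M (- future L)) \<Longrightarrow> 0 \<le> \<gamma> A \<omega> \<and> \<gamma> A \<omega> \<le> 1"
  using K unfolding proper_oriented_kernel_def by auto

lemma kernel_total: "\<omega> \<in> Omega M \<Longrightarrow> \<gamma> (Omega M) \<omega> = 1"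
  using K unfolding proper_oriented_kernel_def by auto

lemma kernel_measurable_past:
  "A \<in> sets (Fsig M L) \<Longrightarrow> (\<lambda>\<omega>. \<gamma> A \<omega>) \<in> borel_measurable (Fsig M (past L))"
  using K unfolding proper_oriented_kernel_def by auto

lemma kernel_proper:
  "B \<in> sets (Fsig M (past L \<union> outer L)) \<Longrightarrow> \<omega> \<in> Omega M \<Longrightarrow> \<gamma> B \<omega> = indicator B \<omega>"
  using K unfolding proper_oriented_kernel_def by auto

lemma sets_box_domain: "sets (Fsig M L) \<subseteq> sets (Fsig M (- future L))"
  by (rule Fsig_mono) (use box_Int_future[of L] in auto)

lemma sets_past_outer_domain: "sets (Fsig M (past L \<union> outer L)) \<subseteq> sets (Fsig M (- future L))"
  by (rule Fsig_mono[OF past_outer_subset[OF tL]])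

lemma sets_kernel_measure [simp]: "sets (kernel_measure M L \<gamma> \<omega>) = sets (Fsig M (- future L))"
  unfolding kernel_measure_def
  using sets_measure_of[OF sets.space_closed[of "Fsig M (- future L)"]]
    sets.sigma_sets_eq[of "Fsig M (- future L)"] by simp

lemma space_kernel_measure [simp]: "space (kernel_measure M L \<gamma> \<omega>) = Omega M"
  unfolding kernel_measure_def
  using space_measure_of[OF sets.space_closed[of "Fsig M (- future L)"]] by simp

lemma emeasure_kernel_measure:
  "\<omega> \<in> Omega M \<Longrightarrow> A \<in> sets (Fsig M (- future L)) \<Longrightarrow>
    emeasure (kernel_measure M L \<gamma> \<omega>) A = ennreal (\<gamma> A \<omega>)"
  unfolding kernel_measure_def using kernel_measure_space
  by (intro emeasure_measure_of_sigma) (auto simp: measure_space_def)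

lemma measure_kernel_measure:
  "\<omega> \<in> Omega M \<Longrightarrow> A \<in> sets (Fsig M (- future L)) \<Longrightarrow>
    measure (kernel_measure M L \<gamma> \<omega>) A = \<gamma> A \<omega>"
  unfolding measure_def using emeasure_kernel_measure kernel_bounds by simp

lemma prob_space_kernel_measure: "\<omega> \<in> Omega M \<Longrightarrow> prob_space (kernel_measure M L \<gamma> \<omega>)"
  by (rule prob_spaceI) (simp add: emeasure_kernel_measure kernel_total)

lemma measurable_kernel_measure:
  "Z \<subseteq> - future L \<Longrightarrow> g \<in> borel_measurable (Fsig M Z) \<Longrightarrow>
    g \<in> borel_measurable (kernel_measure M L \<gamma> \<omega>)"
  using measurable_mono[of borel borel "Fsig M Z" "kernel_measure M L \<gamma> \<omega>"] Fsig_mono[of Z _ M]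
  by auto

text \<open>Properness says that under \<open>\<gamma>(\<cdot>, \<omega>)\<close> the past and the outer time are frozen at their
  values in \<open>\<omega>\<close>; hence any function of them is almost surely constant.\<close>
lemma kernel_AE_frozen:
  fixes f :: "('s \<Rightarrow> 'e) \<Rightarrow> real"
  assumes f: "f \<in> borel_measurable (Fsig M (past L \<union> outer L))" and \<omega>: "\<omega> \<in> Omega M"
  shows "AE \<sigma> in kernel_measure M L \<gamma> \<omega>. f \<sigma> = f \<omega>"
proof -
  interpret P: prob_space "kernel_measure M L \<gamma> \<omega>" by (rule prob_space_kernel_measure[OF \<omega>])
  define B where "B = f -` {f \<omega>} \<inter> Omega M"
  have B: "B \<in> sets (Fsig M (past L \<union> outer L))"
    unfolding B_def using measurable_sets[OF f borel_closed[OF closed_singleton]] by simp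
  have "\<gamma> B \<omega> = 1" using kernel_proper[OF B \<omega>] \<omega> by (simp add: B_def)
  then have "P.prob B = 1"
    using measure_kernel_measure[OF \<omega>] B sets_past_outer_domain by auto
  then have "AE \<sigma> in kernel_measure M L \<gamma> \<omega>. \<sigma> \<in> B" by (rule P.AE_prob_1)
  then show ?thesis by eventually_elim (simp add: B_def)
qed

lemma kernel_pull_out:
  fixes f :: "('s \<Rightarrow> 'e) \<Rightarrow> real"
  assumes f: "f \<in> borel_measurable (Fsig M (past L \<union> outer L))"
    and A: "A \<in> sets (Fsig M (- future L))" and \<omega>: "\<omega> \<in> Omega M"
  shows "(\<integral>\<sigma>. f \<sigma> * indicator A \<sigma> \<partial>kernel_measure M L \<gamma> \<omega>) = f \<omega> * \<gamma> A \<omega>"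
proof -
  have fK: "f \<in> borel_measurable (kernel_measure M L \<gamma> \<omega>)"
    by (rule measurable_kernel_measure[OF past_outer_subset[OF tL] f])
  have AK: "(indicator A :: _ \<Rightarrow> real) \<in> borel_measurable (kernel_measure M L \<gamma> \<omega>)"
    using A by (intro borel_measurable_indicator) simp
  have "(\<integral>\<sigma>. f \<sigma> * indicator A \<sigma> \<partial>kernel_measure M L \<gamma> \<omega>)
      = (\<integral>\<sigma>. f \<omega> * indicator A \<sigma> \<partial>kernel_measure M L \<gamma> \<omega>)"
  proof (rule integral_cong_AE)
    show "(\<lambda>\<sigma>. f \<sigma> * indicator A \<sigma>) \<in> borel_measurable (kernel_measure M L \<gamma> \<omega>)"
      using fK AK by (rule borel_measurable_times)
    show "(\<lambda>\<sigma>. f \<omega> * indicator A \<sigma>) \<in> borel_measurable (kernel_measure M L \<gamma> \<omega>)"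
      using AK by (intro borel_measurable_times) simp_all
    show "AE \<sigma> in kernel_measure M L \<gamma> \<omega>. f \<sigma> * indicator A \<sigma> = f \<omega> * indicator A \<sigma>"
      using kernel_AE_frozen[OF f \<omega>] by eventually_elim simp
  qed
  also have "\<dots> = f \<omega> * measure (kernel_measure M L \<gamma> \<omega>) A"
    using sets.sets_into_space[OF A] by (simp add: Int_absorb2)
  finally show ?thesis using measure_kernel_measure[OF \<omega> A] by simp
qed

lemma kernel_Int_frozen:
  assumes A: "A \<in> sets (Fsig M (- future L))" and B: "B \<in> sets (Fsig M (past L \<union> outer L))"
    and \<omega>: "\<omega> \<in> Omega M"
  shows "\<gamma> (A \<inter> B) \<omega> = \<gamma> A \<omega> * indicator B \<omega>"
proof -
  have AB: "A \<inter> B \<in> sets (Fsig M (- future L))" using A B sets_past_outer_domain by auto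
  have "\<gamma> (A \<inter> B) \<omega> = (\<integral>\<sigma>. indicator B \<sigma> * indicator A \<sigma> \<partial>kernel_measure M L \<gamma> \<omega>)"
    using measure_kernel_measure[OF \<omega> AB] sets.sets_into_space[OF AB]
    by (simp add: indicator_inter_arith[symmetric] Int_commute Int_absorb1 Int_absorb2)
  also have "\<dots> = \<gamma> A \<omega> * indicator B \<omega>"
    using kernel_pull_out[OF borel_measurable_indicator[OF B] A \<omega>] by simp
  finally show ?thesis .
qed

lemma kernel_empty: "\<omega> \<in> Omega M \<Longrightarrow> \<gamma> {} \<omega> = 0"
  using measure_kernel_measure[of \<omega> "{}"] by simp

lemma kernel_compl:
  assumes X: "X \<in> sets (Fsig M (- future L))" and \<omega>: "\<omega> \<in> Omega M"
  shows "\<gamma> (Omega M - X) \<omega> = 1 - \<gamma> X \<omega>"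
proof -
  interpret P: prob_space "kernel_measure M L \<gamma> \<omega>" by (rule prob_space_kernel_measure[OF \<omega>])
  show ?thesis using P.prob_compl[of X] X measure_kernel_measure[OF \<omega>] by (simp add: sets.Diff)
qed

lemma kernel_sums:
  assumes A: "range A \<subseteq> sets (Fsig M (- future L))" and disj: "disjoint_family A"
    and \<omega>: "\<omega> \<in> Omega M"
  shows "(\<lambda>i. \<gamma> (A i) \<omega>) sums \<gamma> (\<Union>i. A i) \<omega>"
proof -
  interpret P: prob_space "kernel_measure M L \<gamma> \<omega>" by (rule prob_space_kernel_measure[OF \<omega>])
  have "(\<lambda>i. P.prob (A i)) sums P.prob (\<Union>i. A i)"
    using A disj by (intro P.finite_measure_UNION) auto
  moreover have "(\<Union>i. A i) \<in> sets (Fsig M (- future L))" using A by blast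
  ultimately show ?thesis using measure_kernel_measure[OF \<omega>] A by auto
qed

text \<open>On a rectangle \<open>a \<inter> b\<close>, with \<open>a\<close> on the box and \<open>b\<close> frozen, \<open>\<gamma>(a \<inter> b, \<cdot>)\<close> is
  \<open>\<gamma>(a, \<cdot>)\<close> times the indicator of \<open>b\<close>, a function of the past of \<open>L\<close> and of \<open>b\<close>'s coordinates.\<close>
lemma kernel_measurable_rect:
  assumes a: "a \<in> sets (Fsig M L)" and b: "b \<in> sets (Fsig M W)"
    and W: "W \<subseteq> past L \<union> outer L"
  shows "(\<lambda>\<omega>. \<gamma> (a \<inter> b) \<omega>) \<in> borel_measurable (Fsig M (past L \<union> W))"
proof (rule measurable_Fsig_cong)
  have "b \<in> sets (Fsig M (past L \<union> outer L))" using b Fsig_mono[OF W] by blast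
  then show "\<gamma> (a \<inter> b) \<omega> = \<gamma> a \<omega> * indicator b \<omega>" if "\<omega> \<in> Omega M" for \<omega>
    using kernel_Int_frozen[OF _ _ that] a sets_box_domain by blast
  show "(\<lambda>\<omega>. \<gamma> a \<omega> * indicator b \<omega>) \<in> borel_measurable (Fsig M (past L \<union> W))"
  proof (rule borel_measurable_times)
    show "(\<lambda>\<omega>. \<gamma> a \<omega>) \<in> borel_measurable (Fsig M (past L \<union> W))"
      using kernel_measurable_past[OF a] by (rule measurable_Fsig_mono) blast
    show "indicator b \<in> borel_measurable (Fsig M (past L \<union> W))"
      using b Fsig_mono[of W "past L \<union> W" M] by (intro borel_measurable_indicator) auto
  qed
qed

text \<open>Rectangles generate \<open>Fsig M U\<close>, and the good events form a Dynkin system.\<close>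
lemma kernel_measurable_coords:
  assumes LU: "L \<subseteq> U" and U: "U \<subseteq> - future L" and A: "A \<in> sets (Fsig M U)"
  shows "(\<lambda>\<omega>. \<gamma> A \<omega>) \<in> borel_measurable (Fsig M (past L \<union> (U - L)))"
proof -
  let ?Y = "Fsig M (past L \<union> (U - L))"
  have "L \<union> (U - L) = U" using LU by blast
  then have gen: "sets (Fsig M U) = sigma_sets (Omega M) (rects M L (U - L))"
    using sets_Fsig_Un_rects[of M L "U - L"] by (simp only:)
  have dom: "sigma_sets (Omega M) (rects M L (U - L)) \<subseteq> sets (Fsig M (- future L))"
    unfolding gen[symmetric] by (rule Fsig_mono[OF U])
  have "A \<in> sigma_sets (Omega M) (rects M L (U - L))" using A gen by simp
  with rects_Int_stable rects_Pow show ?thesis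
  proof (induction A rule: sigma_sets_induct_disjoint)
    case (basic X)
    moreover have "U - L \<subseteq> past L \<union> outer L" using U compl_future_minus[of L] by blast
    ultimately show ?case unfolding rects_def using kernel_measurable_rect by blast
  next
    case empty
    show ?case by (rule measurable_Fsig_cong[where g="\<lambda>_. 0"]) (simp_all add: kernel_empty)
  next
    case (compl X)
    have "\<gamma> (Omega M - X) \<omega> = 1 - \<gamma> X \<omega>" if "\<omega> \<in> Omega M" for \<omega>
      using kernel_compl[OF _ that] compl.hyps(1) dom by blast
    moreover have "(\<lambda>\<omega>. 1 - \<gamma> X \<omega>) \<in> borel_measurable ?Y"
      using borel_measurable_const compl.IH by (rule borel_measurable_diff)
    ultimately show ?case by (rule measurable_Fsig_cong)
  next
    case (union A)
    have "(\<lambda>n. \<Sum>i<n. \<gamma> (A i) \<omega>) \<longlonglongrightarrow> \<gamma> (\<Union>i. A i) \<omega>" if "\<omega> \<in> space ?Y" for \<omega>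
      using kernel_sums[of A \<omega>] union.hyps dom that by (auto simp: sums_def)
    moreover have "(\<lambda>\<omega>. \<Sum>i<n. \<gamma> (A i) \<omega>) \<in> borel_measurable ?Y" for n
      by (rule borel_measurable_sum) (rule union.IH)
    ultimately show ?case by (rule borel_measurable_LIMSEQ_metric[rotated])
  qed
qed

text \<open>Integrating against the kernel preserves this dependence: if \<open>g\<close> depends on the
  coordinates \<open>Z\<close>, \<open>L \<subseteq> Z \<subseteq> - future L\<close>, then so does \<open>\<omega> \<mapsto> \<integral>g d\<gamma>(\<cdot>, \<omega>)\<close>
  on \<open>past L \<union> (Z - L)\<close>; proved for indicators above and extended by monotone convergence.\<close>
lemma kernel_nn_integral_measurable:
  fixes g :: "('s \<Rightarrow> 'e) \<Rightarrow> ennreal"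
  assumes LZ: "L \<subseteq> Z" and Z: "Z \<subseteq> - future L" and g: "g \<in> borel_measurable (Fsig M Z)"
  shows "(\<lambda>\<omega>. \<integral>\<^sup>+\<sigma>. g \<sigma> \<partial>kernel_measure M L \<gamma> \<omega>) \<in> borel_measurable (Fsig M (past L \<union> (Z - L)))"
  using g
proof (induction rule: borel_measurable_induct)
  case (cong f g)
  have "(\<integral>\<^sup>+\<sigma>. f \<sigma> \<partial>kernel_measure M L \<gamma> \<omega>) = (\<integral>\<^sup>+\<sigma>. g \<sigma> \<partial>kernel_measure M L \<gamma> \<omega>)" for \<omega>
    using cong.hyps(3) by (intro nn_integral_cong) simp
  then show ?case using cong.IH by simp
next
  case (set A)
  have "A \<in> sets (Fsig M (- future L))" using set Fsig_mono[OF Z] by auto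
  then have "(\<integral>\<^sup>+\<sigma>. indicator A \<sigma> \<partial>kernel_measure M L \<gamma> \<omega>) = ennreal (\<gamma> A \<omega>)"
    if "\<omega> \<in> Omega M" for \<omega>
    using emeasure_kernel_measure[OF that] by simp
  moreover have "(\<lambda>\<omega>. ennreal (\<gamma> A \<omega>)) \<in> borel_measurable (Fsig M (past L \<union> (Z - L)))"
    using kernel_measurable_coords[OF LZ Z set] by measurable
  ultimately show ?case by (rule measurable_Fsig_cong)
next
  case (mult u c)
  have "(\<integral>\<^sup>+\<sigma>. c * u \<sigma> \<partial>kernel_measure M L \<gamma> \<omega>) = c * (\<integral>\<^sup>+\<sigma>. u \<sigma> \<partial>kernel_measure M L \<gamma> \<omega>)" for \<omega>
    using mult.hyps by (intro nn_integral_cmult measurable_kernel_measure[OF Z]) auto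
  then show ?case using mult.IH by simp
next
  case (add u v)
  have "(\<integral>\<^sup>+\<sigma>. v \<sigma> + u \<sigma> \<partial>kernel_measure M L \<gamma> \<omega>)
      = (\<integral>\<^sup>+\<sigma>. v \<sigma> \<partial>kernel_measure M L \<gamma> \<omega>) + (\<integral>\<^sup>+\<sigma>. u \<sigma> \<partial>kernel_measure M L \<gamma> \<omega>)" for \<omega>
    using add.hyps by (intro nn_integral_add measurable_kernel_measure[OF Z]) auto
  then show ?case using add.IH by simp
next
  case (seq U)
  have "(\<integral>\<^sup>+\<sigma>. (SUP i. U i) \<sigma> \<partial>kernel_measure M L \<gamma> \<omega>) = (SUP i. \<integral>\<^sup>+\<sigma>. U i \<sigma> \<partial>kernel_measure M L \<gamma> \<omega>)"
    for \<omega>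
    unfolding SUP_apply
    by (rule nn_integral_monotone_convergence_SUP)
      (use seq.hyps measurable_kernel_measure[OF Z seq.hyps(1)] in auto)
  then show ?case using seq.IH by simp
qed

lemma kernel_integral_measurable:
  fixes f :: "('s \<Rightarrow> 'e) \<Rightarrow> real"
  assumes LZ: "L \<subseteq> Z" and Z: "Z \<subseteq> - future L" and f: "f \<in> borel_measurable (Fsig M Z)"
    and nonneg: "\<And>\<sigma>. \<sigma> \<in> Omega M \<Longrightarrow> 0 \<le> f \<sigma>"
  shows "(\<lambda>\<omega>. \<integral>\<sigma>. f \<sigma> \<partial>kernel_measure M L \<gamma> \<omega>) \<in> borel_measurable (Fsig M (past L \<union> (Z - L)))"
proof -
  have "(\<integral>\<sigma>. f \<sigma> \<partial>kernel_measure M L \<gamma> \<omega>) = enn2real (\<integral>\<^sup>+\<sigma>. ennreal (f \<sigma>) \<partial>kernel_measure M L \<gamma> \<omega>)"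
    for \<omega>
    using nonneg measurable_kernel_measure[OF Z f] by (intro integral_eq_nn_integral AE_I2) auto
  moreover have "(\<lambda>\<sigma>. ennreal (f \<sigma>)) \<in> borel_measurable (Fsig M Z)" using f by measurable
  ultimately show ?thesis
    using kernel_nn_integral_measurable[OF LZ Z] by (simp add: borel_measurable_enn2real)
qed

end

section \<open>Composition of kernels on incomparable boxes\<close>

locale incomparable_kernels =
  KD: kernel_on_box M D \<gamma>D + KL: kernel_on_box M L \<gamma>L
  for M :: "'e measure" and D L :: "'s::order set"
    and \<gamma>D \<gamma>L :: "('s \<Rightarrow> 'e) set \<Rightarrow> ('s \<Rightarrow> 'e) \<Rightarrow> real" +
  assumes DL: "D \<subseteq> outer L"
begin

lemma swap: "incomparable_kernels M L D \<gamma>L \<gamma>D"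
  by (intro_locales) (simp add: incomparable_kernels_axioms_def outer_sym[OF DL])

lemma domain_subset: "- future (D \<union> L) \<subseteq> - future D \<inter> - future L"
  using future_Un[OF DL] by auto

lemma boxes_in_domain: "D \<union> L \<subseteq> - future (D \<union> L)"
  using future_Un[OF DL] box_Int_future[of D] box_Int_future[of L] DL outer_sym[OF DL]
  unfolding future_def outer_def by (auto dest: order.strict_implies_order)

lemma comp_integrand_measurable:
  assumes LU: "L \<subseteq> U" and U: "U \<subseteq> - future (D \<union> L)" and A: "A \<in> sets (Fsig M U)"
  shows "(\<lambda>\<sigma>. \<gamma>L A \<sigma>) \<in> borel_measurable (Fsig M (past L \<union> (U - L)))"
    and "past L \<union> (U - L) \<subseteq> - future D"
proof -
  show "(\<lambda>\<sigma>. \<gamma>L A \<sigma>) \<in> borel_measurable (Fsig M (past L \<union> (U - L)))"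
    using KL.kernel_measurable_coords[OF LU _ A] U domain_subset by blast
  show "past L \<union> (U - L) \<subseteq> - future D"
    using past_subset_past_outer[OF outer_sym[OF DL]] past_outer_subset[OF KD.tL] U domain_subset
    by blast
qed

lemma comp_measurable:
  assumes LU: "L \<subseteq> U" and U: "U \<subseteq> - future (D \<union> L)" and A: "A \<in> sets (Fsig M U)"
  shows "(\<lambda>\<omega>. kernel_comp M D \<gamma>D \<gamma>L A \<omega>) \<in> borel_measurable (Fsig M (past (D \<union> L) \<union> (U - (D \<union> L))))"
proof -
  let ?Z = "D \<union> (past L \<union> (U - L))"
  note f = comp_integrand_measurable[OF LU U A]
  have A_dom: "A \<in> sets (Fsig M (- future L))" using A Fsig_mono[of U "- future L"] U domain_subset by blast
  have "(\<lambda>\<omega>. \<integral>\<sigma>. \<gamma>L A \<sigma> \<partial>kernel_measure M D \<gamma>D \<omega>) \<in> borel_measurable (Fsig M (past D \<union> (?Z - D)))"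
  proof (rule KD.kernel_integral_measurable)
    show "?Z \<subseteq> - future D" using f(2) box_Int_future[of D] by blast
    show "(\<lambda>\<sigma>. \<gamma>L A \<sigma>) \<in> borel_measurable (Fsig M ?Z)" using f(1) by (rule measurable_Fsig_mono) blast
    show "0 \<le> \<gamma>L A \<sigma>" if "\<sigma> \<in> Omega M" for \<sigma> using KL.kernel_bounds[OF that A_dom] by simp
  qed simp
  moreover have "past D \<union> (?Z - D) \<subseteq> past (D \<union> L) \<union> (U - (D \<union> L))"
    using past_Un[OF DL] by blast
  ultimately show ?thesis unfolding kernel_comp_def by (rule measurable_Fsig_mono)
qed


text \<open>On the domain of the union box the composition is well defined: the integrand is
  measurable for \<open>\<gamma>D(\<cdot>, \<omega>)\<close>, takes values in \<open>[0, 1]\<close>, hence is integrable.\<close>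
lemma comp_integrand_kernel_measurable:
  assumes A: "A \<in> sets (Fsig M (- future (D \<union> L)))"
  shows "(\<lambda>\<sigma>. \<gamma>L A \<sigma>) \<in> borel_measurable (kernel_measure M D \<gamma>D \<omega>)"
proof -
  have LV: "L \<subseteq> - future (D \<union> L)" using boxes_in_domain by blast
  note f = comp_integrand_measurable[OF LV order.refl A]
  show ?thesis by (rule KD.measurable_kernel_measure[OF f(2) f(1)])
qed

lemma comp_integrand_bounds:
  "\<sigma> \<in> Omega M \<Longrightarrow> A \<in> sets (Fsig M (- future (D \<union> L))) \<Longrightarrow> 0 \<le> \<gamma>L A \<sigma> \<and> \<gamma>L A \<sigma> \<le> 1"
  using KL.kernel_bounds Fsig_mono[of "- future (D \<union> L)" "- future L" M] domain_subset by blast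

lemma comp_integrable:
  assumes \<omega>: "\<omega> \<in> Omega M" and A: "A \<in> sets (Fsig M (- future (D \<union> L)))"
  shows "integrable (kernel_measure M D \<gamma>D \<omega>) (\<lambda>\<sigma>. \<gamma>L A \<sigma>)"
proof -
  interpret P: prob_space "kernel_measure M D \<gamma>D \<omega>" by (rule KD.prob_space_kernel_measure[OF \<omega>])
  show ?thesis
    using comp_integrand_bounds[OF _ A] comp_integrand_kernel_measurable[OF A]
    by (intro P.integrable_const_bound[where B=1]) auto
qed

lemma comp_nn_integral:
  assumes \<omega>: "\<omega> \<in> Omega M" and A: "A \<in> sets (Fsig M (- future (D \<union> L)))"
  shows "ennreal (kernel_comp M D \<gamma>D \<gamma>L A \<omega>) = (\<integral>\<^sup>+\<sigma>. ennreal (\<gamma>L A \<sigma>) \<partial>kernel_measure M D \<gamma>D \<omega>)"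
  unfolding kernel_comp_def using comp_integrand_bounds[OF _ A]
  by (intro nn_integral_eq_integral[symmetric] comp_integrable[OF \<omega> A] AE_I2) auto

text \<open>For fixed \<open>\<omega>\<close> the composition is a probability on the domain of the union box:
  countable additivity follows from that of \<open>\<gamma>L(\<cdot>, \<sigma>)\<close> by monotone convergence.\<close>
lemma comp_measure_space:
  assumes \<omega>: "\<omega> \<in> Omega M"
  shows "measure_space (Omega M) (sets (Fsig M (- future (D \<union> L))))
           (\<lambda>A. ennreal (kernel_comp M D \<gamma>D \<gamma>L A \<omega>))"
  unfolding measure_space_def
proof (intro conjI)
  show "sigma_algebra (Omega M) (sets (Fsig M (- future (D \<union> L))))"
    unfolding sets_Fsig by (rule sigma_algebra_sigma_sets[OF coord_gen_Pow])
  have "kernel_comp M D \<gamma>D \<gamma>L {} \<omega> = (\<integral>\<sigma>. 0 \<partial>kernel_measure M D \<gamma>D \<omega>)"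
    unfolding kernel_comp_def by (intro Bochner_Integration.integral_cong) (simp_all add: KL.kernel_empty)
  then have "kernel_comp M D \<gamma>D \<gamma>L {} \<omega> = 0" by simp
  then show "positive (sets (Fsig M (- future (D \<union> L)))) (\<lambda>A. ennreal (kernel_comp M D \<gamma>D \<gamma>L A \<omega>))"
    unfolding positive_def by simp
  show "countably_additive (sets (Fsig M (- future (D \<union> L)))) (\<lambda>A. ennreal (kernel_comp M D \<gamma>D \<gamma>L A \<omega>))"
  proof (rule countably_additiveI)
    fix A :: "nat \<Rightarrow> _"
    assume A: "range A \<subseteq> sets (Fsig M (- future (D \<union> L)))" and disj: "disjoint_family A"
      and UA: "\<Union> (range A) \<in> sets (Fsig M (- future (D \<union> L)))"
    have A_dom: "range A \<subseteq> sets (Fsig M (- future L))" "\<Union> (range A) \<in> sets (Fsig M (- future L))"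
      using A UA Fsig_mono[of "- future (D \<union> L)" "- future L" M] domain_subset by auto
    have pointwise: "(\<Sum>i. ennreal (\<gamma>L (A i) \<sigma>)) = ennreal (\<gamma>L (\<Union> (range A)) \<sigma>)"
      if "\<sigma> \<in> Omega M" for \<sigma>
      using KL.kernel_measure_space[OF that] A_dom disj
      unfolding measure_space_def countably_additive_def by blast
    have "(\<Sum>i. ennreal (kernel_comp M D \<gamma>D \<gamma>L (A i) \<omega>))
        = (\<Sum>i. \<integral>\<^sup>+\<sigma>. ennreal (\<gamma>L (A i) \<sigma>) \<partial>kernel_measure M D \<gamma>D \<omega>)"
      using comp_nn_integral[OF \<omega>] A by auto
    also have "\<dots> = (\<integral>\<^sup>+\<sigma>. (\<Sum>i. ennreal (\<gamma>L (A i) \<sigma>)) \<partial>kernel_measure M D \<gamma>D \<omega>)"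
      using comp_integrand_kernel_measurable A by (intro nn_integral_suminf[symmetric]) auto
    also have "\<dots> = (\<integral>\<^sup>+\<sigma>. ennreal (\<gamma>L (\<Union> (range A)) \<sigma>) \<partial>kernel_measure M D \<gamma>D \<omega>)"
      using pointwise by (intro nn_integral_cong) simp
    also have "\<dots> = ennreal (kernel_comp M D \<gamma>D \<gamma>L (\<Union> (range A)) \<omega>)"
      using comp_nn_integral[OF \<omega> UA] by simp
    finally show "(\<Sum>i. ennreal (kernel_comp M D \<gamma>D \<gamma>L (A i) \<omega>))
        = ennreal (kernel_comp M D \<gamma>D \<gamma>L (\<Union> (range A)) \<omega>)" .
  qed
qed

lemma comp_bounds:
  assumes \<omega>: "\<omega> \<in> Omega M" and A: "A \<in> sets (Fsig M (- future (D \<union> L)))"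
  shows "0 \<le> kernel_comp M D \<gamma>D \<gamma>L A \<omega> \<and> kernel_comp M D \<gamma>D \<gamma>L A \<omega> \<le> 1"
proof -
  interpret P: prob_space "kernel_measure M D \<gamma>D \<omega>" by (rule KD.prob_space_kernel_measure[OF \<omega>])
  have "kernel_comp M D \<gamma>D \<gamma>L A \<omega> \<le> (\<integral>\<sigma>. 1 \<partial>kernel_measure M D \<gamma>D \<omega>)"
    unfolding kernel_comp_def using comp_integrand_bounds[OF _ A]
    by (intro Bochner_Integration.integral_mono comp_integrable[OF \<omega> A]) auto
  moreover have "0 \<le> kernel_comp M D \<gamma>D \<gamma>L A \<omega>"
    unfolding kernel_comp_def using comp_integrand_bounds[OF _ A]
    by (intro Bochner_Integration.integral_nonneg) auto
  ultimately show ?thesis using P.prob_space by simp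
qed

lemma comp_total:
  assumes \<omega>: "\<omega> \<in> Omega M"
  shows "kernel_comp M D \<gamma>D \<gamma>L (Omega M) \<omega> = 1"
proof -
  interpret P: prob_space "kernel_measure M D \<gamma>D \<omega>" by (rule KD.prob_space_kernel_measure[OF \<omega>])
  have "kernel_comp M D \<gamma>D \<gamma>L (Omega M) \<omega> = (\<integral>\<sigma>. 1 \<partial>kernel_measure M D \<gamma>D \<omega>)"
    unfolding kernel_comp_def by (intro Bochner_Integration.integral_cong) (simp_all add: KL.kernel_total)
  then show ?thesis using P.prob_space by simp
qed

text \<open>Properness of the composition: an event frozen for the union box is frozen for
  both boxes, so integrating its indicator against \<open>\<gamma>D\<close> returns the indicator.\<close>
lemma comp_proper_on_frozen:
  assumes B: "B \<in> sets (Fsig M (past (D \<union> L) \<union> outer (D \<union> L)))" and \<omega>: "\<omega> \<in> Omega M"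
  shows "kernel_comp M D \<gamma>D \<gamma>L B \<omega> = indicator B \<omega>"
proof -
  have BL: "B \<in> sets (Fsig M (past L \<union> outer L))"
    using B Fsig_mono[OF past_outer_Un_subset[OF KD.tL KL.tL DL]] by blast
  have "past (D \<union> L) \<union> outer (D \<union> L) \<subseteq> past D \<union> outer D"
    using past_outer_Un_subset[OF KL.tL KD.tL outer_sym[OF DL]] by (simp only: Un_commute[of L D])
  then have BD: "B \<in> sets (Fsig M (past D \<union> outer D))" using B Fsig_mono by blast
  then have BD_dom: "B \<in> sets (Fsig M (- future D))" using KD.sets_past_outer_domain by blast
  have "kernel_comp M D \<gamma>D \<gamma>L B \<omega> = (\<integral>\<sigma>. indicator B \<sigma> \<partial>kernel_measure M D \<gamma>D \<omega>)"
    unfolding kernel_comp_def using KL.kernel_proper[OF BL] by (intro Bochner_Integration.integral_cong) simp_all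
  also have "\<dots> = \<gamma>D B \<omega>"
    using KD.measure_kernel_measure[OF \<omega> BD_dom] sets.sets_into_space[OF BD_dom]
    by (simp add: Int_absorb1 Int_absorb2)
  also have "\<dots> = indicator B \<omega>" by (rule KD.kernel_proper[OF BD \<omega>])
  finally show ?thesis .
qed

theorem comp_proper_oriented_kernel: "proper_oriented_kernel M (D \<union> L) (kernel_comp M D \<gamma>D \<gamma>L)"
  unfolding proper_oriented_kernel_def
proof (intro conjI ballI)
  fix A assume A: "A \<in> sets (Fsig M (- future (D \<union> L)))"
  have "past (D \<union> L) \<union> (- future (D \<union> L) - (D \<union> L)) \<subseteq> past (D \<union> L) \<union> outer (D \<union> L)"
    using compl_future_minus[of "D \<union> L"] by blast
  then show "(\<lambda>\<omega>. kernel_comp M D \<gamma>D \<gamma>L A \<omega>) \<in> borel_measurable (Fsig M (past (D \<union> L) \<union> outer (D \<union> L)))"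
    using comp_measurable[OF _ order.refl A] boxes_in_domain by (blast intro: measurable_Fsig_mono)
next
  fix A assume "A \<in> sets (Fsig M (D \<union> L))"
  then show "(\<lambda>\<omega>. kernel_comp M D \<gamma>D \<gamma>L A \<omega>) \<in> borel_measurable (Fsig M (past (D \<union> L)))"
    using comp_measurable[of "D \<union> L" A] boxes_in_domain by simp
qed (use comp_measure_space comp_bounds comp_total comp_proper_on_frozen in auto)


lemma comp_kernel_on_box: "kernel_on_box M (D \<union> L) (kernel_comp M D \<gamma>D \<gamma>L)"
  by unfold_locales (rule time_box_Un[OF KD.tL KL.tL DL], rule comp_proper_oriented_kernel)

text \<open>Both compositions on a rectangle \<open>a \<inter> b\<close>, \<open>a\<close> an event on \<open>D\<close> and \<open>b\<close> one on the
  rest of the domain: in each order the outer kernel sees the inner kernel's factor as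
  frozen, so both compositions equal \<open>\<gamma>D(a, \<omega>) \<gamma>L(b, \<omega>)\<close>.\<close>
lemma comp_on_rectangle:
  assumes a: "a \<in> sets (Fsig M D)" and b: "b \<in> sets (Fsig M (- future (D \<union> L) - D))"
    and \<omega>: "\<omega> \<in> Omega M"
  shows "kernel_comp M D \<gamma>D \<gamma>L (a \<inter> b) \<omega> = \<gamma>D a \<omega> * \<gamma>L b \<omega>"
proof -
  let ?U = "- future (D \<union> L) - D"
  have LU: "L \<subseteq> ?U" using boxes_in_domain DL outer_sym[OF DL] unfolding outer_def by auto
  have U: "?U \<subseteq> - future (D \<union> L)" by blast
  note f = comp_integrand_measurable[OF LU U b]
  have "past L \<inter> D = {}"
    using DL unfolding past_def outer_def by (blast dest: order.strict_implies_order)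
  then have "past L \<union> (?U - L) \<subseteq> - future D - D" using f(2) by blast
  then have f_frozen: "(\<lambda>\<sigma>. \<gamma>L b \<sigma>) \<in> borel_measurable (Fsig M (past D \<union> outer D))"
    using f(1) compl_future_minus[of D] by (blast intro: measurable_Fsig_mono)
  have a_frozen: "a \<in> sets (Fsig M (past L \<union> outer L))" using a Fsig_mono[of D _ M] DL by blast
  have b_dom: "b \<in> sets (Fsig M (- future L))" using b Fsig_mono[of ?U _ M] domain_subset by blast
  have "kernel_comp M D \<gamma>D \<gamma>L (a \<inter> b) \<omega> = (\<integral>\<sigma>. \<gamma>L b \<sigma> * indicator a \<sigma> \<partial>kernel_measure M D \<gamma>D \<omega>)"
    unfolding kernel_comp_def using KL.kernel_Int_frozen[OF b_dom a_frozen]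
    by (intro Bochner_Integration.integral_cong) (simp_all add: Int_commute)
  also have "\<dots> = \<gamma>L b \<omega> * \<gamma>D a \<omega>"
    using KD.kernel_pull_out[OF f_frozen _ \<omega>] a KD.sets_box_domain by blast
  finally show ?thesis by simp
qed

lemma comp_on_rectangle_swapped:
  assumes a: "a \<in> sets (Fsig M D)" and b: "b \<in> sets (Fsig M (- future (D \<union> L) - D))"
    and \<omega>: "\<omega> \<in> Omega M"
  shows "kernel_comp M L \<gamma>L \<gamma>D (a \<inter> b) \<omega> = \<gamma>D a \<omega> * \<gamma>L b \<omega>"
proof -
  have "- future (D \<union> L) - D \<subseteq> past D \<union> outer D"
    using domain_subset compl_future_minus[of D] by blast
  then have b_frozen: "b \<in> sets (Fsig M (past D \<union> outer D))" using b Fsig_mono by blast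
  have b_dom: "b \<in> sets (Fsig M (- future L))"
    using b Fsig_mono[of "- future (D \<union> L) - D" _ M] domain_subset by blast
  have a_dom: "a \<in> sets (Fsig M (- future D))" using a KD.sets_box_domain by blast
  have f_frozen: "(\<lambda>\<sigma>. \<gamma>D a \<sigma>) \<in> borel_measurable (Fsig M (past L \<union> outer L))"
    using KD.kernel_measurable_past[OF a] past_subset_past_outer[OF DL] by (rule measurable_Fsig_mono)
  have "kernel_comp M L \<gamma>L \<gamma>D (a \<inter> b) \<omega> = (\<integral>\<sigma>. \<gamma>D a \<sigma> * indicator b \<sigma> \<partial>kernel_measure M L \<gamma>L \<omega>)"
    unfolding kernel_comp_def using KD.kernel_Int_frozen[OF a_dom b_frozen]
    by (intro Bochner_Integration.integral_cong) simp_all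
  also have "\<dots> = \<gamma>D a \<omega> * \<gamma>L b \<omega>" by (rule KL.kernel_pull_out[OF f_frozen b_dom \<omega>])
  finally show ?thesis .
qed

end

lemma kernels_eq_on_generator:
  assumes K1: "kernel_on_box M L \<gamma>1" and K2: "kernel_on_box M L \<gamma>2"
    and gen: "sets (Fsig M (- future L)) = sigma_sets (Omega M) G"
    and G: "Int_stable G" "G \<subseteq> Pow (Omega M)" "Omega M \<in> G"
    and eq: "\<And>X. X \<in> G \<Longrightarrow> \<gamma>1 X \<omega> = \<gamma>2 X \<omega>"
    and \<omega>: "\<omega> \<in> Omega M" and A: "A \<in> sets (Fsig M (- future L))"
  shows "\<gamma>1 A \<omega> = \<gamma>2 A \<omega>"
proof -
  interpret K1: kernel_on_box M L \<gamma>1 by (rule K1)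
  interpret K2: kernel_on_box M L \<gamma>2 by (rule K2)
  have "kernel_measure M L \<gamma>1 \<omega> = kernel_measure M L \<gamma>2 \<omega>"
  proof (rule measure_eqI_generator_eq[OF G(1,2), where A="\<lambda>_. Omega M"])
    show "X \<in> G \<Longrightarrow> emeasure (kernel_measure M L \<gamma>1 \<omega>) X = emeasure (kernel_measure M L \<gamma>2 \<omega>) X" for X
      using eq K1.emeasure_kernel_measure[OF \<omega>] K2.emeasure_kernel_measure[OF \<omega>] gen sigma_sets.Basic
      by metis
    show "emeasure (kernel_measure M L \<gamma>1 \<omega>) (Omega M) \<noteq> \<infinity>" for i :: nat
      using K1.emeasure_kernel_measure[OF \<omega>] by simp
  qed (use gen G(3) in auto)
  then show ?thesis
    using K1.measure_kernel_measure[OF \<omega> A] K2.measure_kernel_measure[OF \<omega> A] by simp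
qed

context incomparable_kernels
begin

text \<open>The two compositions are proper kernels on the union box agreeing on rectangles,
  which generate its domain.\<close>
theorem comp_commute:
  assumes A: "A \<in> sets (Fsig M (- future (D \<union> L)))" and \<omega>: "\<omega> \<in> Omega M"
  shows "kernel_comp M D \<gamma>D \<gamma>L A \<omega> = kernel_comp M L \<gamma>L \<gamma>D A \<omega>"
proof (rule kernels_eq_on_generator[OF comp_kernel_on_box _ _ rects_Int_stable rects_Pow _ _ \<omega> A])
  interpret LD: incomparable_kernels M L D \<gamma>L \<gamma>D by (rule swap)
  show "kernel_on_box M (D \<union> L) (kernel_comp M L \<gamma>L \<gamma>D)"
    using LD.comp_kernel_on_box by (simp only: Un_commute[of L D])
  have "D \<union> (- future (D \<union> L) - D) = - future (D \<union> L)" using boxes_in_domain by blast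
  then show "sets (Fsig M (- future (D \<union> L))) = sigma_sets (Omega M) (rects M D (- future (D \<union> L) - D))"
    using sets_Fsig_Un_rects[of M D "- future (D \<union> L) - D"] by (simp only:)
  show "Omega M \<in> rects M D (- future (D \<union> L) - D)"
    unfolding rects_def using Omega_in_Fsig by blast
  show "kernel_comp M D \<gamma>D \<gamma>L X \<omega> = kernel_comp M L \<gamma>L \<gamma>D X \<omega>"
    if "X \<in> rects M D (- future (D \<union> L) - D)" for X
    using that comp_on_rectangle[OF _ _ \<omega>] comp_on_rectangle_swapped[OF _ _ \<omega>]
    unfolding rects_def by auto
qed

end

theorem mainTheorem17:
  fixes M :: "'e measure"
    and D L :: "'s::order set"
    and \<gamma>D \<gamma>L :: "('s \<Rightarrow> 'e) set \<Rightarrow> ('s \<Rightarrow> 'e) \<Rightarrow> real"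
  assumes "standing TYPE('s)"
    and "time_box D" and "time_box L"
    and "D \<subseteq> outer L"
    and "proper_oriented_kernel M D \<gamma>D"
    and "proper_oriented_kernel M L \<gamma>L"
  shows "(time_box (D \<union> L) \<and>
          future (D \<union> L) = future D \<union> future L \<and>
          past (D \<union> L) = past D \<union> past L)
       \<and> ((\<forall>A\<in>sets (Fsig M (- future (D \<union> L))). \<forall>\<omega>\<in>Omega M.
             (\<lambda>\<sigma>. \<gamma>L A \<sigma>) \<in> borel_measurable (kernel_measure M D \<gamma>D \<omega>) \<and>
             integrable (kernel_measure M D \<gamma>D \<omega>) (\<lambda>\<sigma>. \<gamma>L A \<sigma>))
          \<and> proper_oriented_kernel M (D \<union> L) (kernel_comp M D \<gamma>D \<gamma>L))
       \<and> (countable (space M) \<longrightarrow>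
          (\<forall>A\<in>sets (Fsig M (- future (D \<union> L))). \<forall>\<omega>\<in>Omega M.
             kernel_comp M D \<gamma>D \<gamma>L A \<omega> = kernel_comp M L \<gamma>L \<gamma>D A \<omega>))"
proof -
  interpret incomparable_kernels M D L \<gamma>D \<gamma>L
    using assms(2-6) by (simp add: incomparable_kernels_def incomparable_kernels_axioms_def kernel_on_box_def)
  show ?thesis
    using time_box_Un[OF assms(2-4)] future_Un[OF assms(4)] past_Un[OF assms(4)]
      comp_integrand_kernel_measurable comp_integrable comp_proper_oriented_kernel comp_commute
    by blast
qed

end
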